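(* Let $\mathbb{F}\subset\mathbb{C}$ be a field, $k\in\mathbb{N}$ with $k\ge2$, and $P\in\mathbb{Q}[x]$ a polynomial of degree $k$ with derivative $P'$. If an additive function $a\colon\mathbb{F}\to\mathbb{C}$ satisfies \[ a(P(x))=P'(x)\,a(x)\qquad(x\in\mathbb{F}), \] then $a$ is a derivation, i.e. $a(xy)=x\,a(y)+a(x)\,y$ for all $x,y\in\mathbb{F}$.
   Context: A function $a\colon\mathbb{F}\to\mathbb{C}$ is additive if $a(x+y)=a(x)+a(y)$ for all $x,y\in\mathbb{F}$; a derivation is an additive function satisfying the Leibniz rule $a(xy)=x\,a(y)+a(x)\,y$. *)

theory Defs
  imports Complex_Main "HOL-Computational_Algebra.Polynomial"
begin

definition complex_subfield :: "complex set \<Rightarrow> bool" where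
  "complex_subfield F \<longleftrightarrow>
     0 \<in> F \<and> 1 \<in> F \<and>
     (\<forall>x\<in>F. \<forall>y\<in>F. x + y \<in> F) \<and>
     (\<forall>x\<in>F. - x \<in> F) \<and>
     (\<forall>x\<in>F. \<forall>y\<in>F. x * y \<in> F) \<and>
     (\<forall>x\<in>F. x \<noteq> 0 \<longrightarrow> inverse x \<in> F)"

definition additive_on :: "complex set \<Rightarrow> (complex \<Rightarrow> complex) \<Rightarrow> bool" where
  "additive_on F a \<longleftrightarrow> (\<forall>x\<in>F. \<forall>y\<in>F. a (x + y) = a x + a y)"

definition derivation_on :: "complex set \<Rightarrow> (complex \<Rightarrow> complex) \<Rightarrow> bool" where
  "derivation_on F a \<longleftrightarrow> additive_on F a \<and>
     (\<forall>x\<in>F. \<forall>y\<in>F. a (x * y) = x * a y + a x * y)"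

end

theory Submission
  imports Defs
begin

text \<open>An additive map is \<open>\<rat>\<close>-linear, so for fixed \<open>x\<close> both sides of \<open>a(P(qx)) = P'(qx) a(qx)\<close>
  and of its consequences are polynomials in the rational parameter \<open>q\<close>, and polynomials agreeing on
  the infinitely many rationals coincide. Comparing leading coefficients of the identity for \<open>qx\<close>
  gives the power rule \<open>a(x\<^sup>k) = k x\<^sup>k\<^sup>-\<^sup>1 a(x)\<close>; at \<open>x = 1\<close> it forces \<open>a\<close> to vanish on \<open>\<rat>\<close>. Applying
  the power rule to \<open>x + q\<close> and comparing the coefficients of \<open>q\<^sup>k\<^sup>-\<^sup>2\<close> gives \<open>a(x\<^sup>2) = 2 x a(x)\<close>,
  and polarization turns this into the Leibniz rule.\<close>

lemma poly_eqI_Rats: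
  fixes p q :: "'a::field_char_0 poly"
  assumes "\<And>x. x \<in> \<rat> \<Longrightarrow> poly p x = poly q x"
  shows "p = q"
proof (rule ccontr)
  assume "p \<noteq> q"
  then have "finite {x. poly (p - q) x = 0}"
    by (intro poly_roots_finite) simp
  moreover have "\<rat> \<subseteq> {x. poly (p - q) x = 0}"
    using assms by auto
  ultimately show False
    using Rats_infinite finite_subset by blast
qed

locale subfield_of_complex =
  fixes F :: "complex set"
  assumes subfield: "complex_subfield F"
begin

lemma zero_mem: "0 \<in> F"
  and one_mem: "1 \<in> F"
  and add_mem: "x \<in> F \<Longrightarrow> y \<in> F \<Longrightarrow> x + y \<in> F"
  and uminus_mem: "x \<in> F \<Longrightarrow> - x \<in> F"
  and mult_mem: "x \<in> F \<Longrightarrow> y \<in> F \<Longrightarrow> x * y \<in> F"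
  and inverse_mem: "x \<in> F \<Longrightarrow> x \<noteq> 0 \<Longrightarrow> inverse x \<in> F"
  using subfield unfolding complex_subfield_def by auto

lemma power_mem: "x \<in> F \<Longrightarrow> x ^ n \<in> F"
  by (induction n) (simp_all add: one_mem mult_mem)

lemma of_nat_mem: "of_nat n \<in> F"
  by (induction n) (simp_all add: zero_mem one_mem add_mem)

lemma of_int_mem: "of_int m \<in> F"
  by (cases m rule: int_cases2) (simp_all add: of_nat_mem uminus_mem)

lemma Rats_subset: "\<rat> \<subseteq> F"
proof
  fix r :: complex assume "r \<in> \<rat>"
  then obtain m n where "n > 0" and "r = of_int m / of_int n"
    by (metis Rats_cases')
  then show "r \<in> F"
    by (simp add: divide_inverse mult_mem inverse_mem of_int_mem)
qed

lemma poly_mem: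
  assumes "\<And>i. coeff p i \<in> F" and "x \<in> F"
  shows "poly p x \<in> F"
  using assms(1)
proof (induction p)
  case (pCons c p)
  have "coeff p i \<in> F" for i
    using pCons.prems[of "Suc i"] by simp
  then show ?case
    using pCons.prems[of 0] pCons.IH \<open>x \<in> F\<close> by (simp add: add_mem mult_mem)
qed (simp add: zero_mem)

end

locale additive_on_subfield = subfield_of_complex +
  fixes a :: "complex \<Rightarrow> complex"
  assumes additive: "additive_on F a"
begin

lemma map_add: "x \<in> F \<Longrightarrow> y \<in> F \<Longrightarrow> a (x + y) = a x + a y"
  using additive unfolding additive_on_def by blast

lemma map_zero: "a 0 = 0"
  using map_add[OF zero_mem zero_mem] by simp

lemma map_uminus:
  assumes "x \<in> F"
  shows "a (- x) = - a x"
proof -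
  have "a x + a (- x) = 0"
    using map_add[OF assms uminus_mem[OF assms]] map_zero by simp
  then show ?thesis
    by (simp add: eq_neg_iff_add_eq_0 add.commute)
qed

lemma map_of_nat_mult: "y \<in> F \<Longrightarrow> a (of_nat n * y) = of_nat n * a y"
proof (induction n)
  case (Suc n)
  then have "a (of_nat n * y + y) = a (of_nat n * y) + a y"
    using map_add mult_mem of_nat_mem by blast
  then show ?case
    using Suc by (simp add: algebra_simps)
qed (simp add: map_zero)

lemma map_of_int_mult:
  assumes "y \<in> F"
  shows "a (of_int m * y) = of_int m * a y"
proof (cases m rule: int_cases2)
  case (nonpos n)
  then show ?thesis
    using map_uminus[OF mult_mem[OF of_nat_mem assms]] map_of_nat_mult[OF assms] by simp
qed (simp add: map_of_nat_mult assms)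

lemma map_Rats_mult:
  assumes "r \<in> \<rat>" and "y \<in> F"
  shows "a (r * y) = r * a y"
proof -
  obtain m n where n: "n > 0" and r: "r = of_int m / of_int n"
    using assms(1) by (metis Rats_cases')
  have ry: "r * y \<in> F"
    using assms Rats_subset mult_mem by blast
  have "of_int n * a (r * y) = a (of_int n * (r * y))"
    using map_of_int_mult[OF ry] by simp
  also have "\<dots> = of_int m * a y"
    using n map_of_int_mult[OF assms(2)] by (simp add: r)
  finally show ?thesis
    using n by (simp add: r field_simps)
qed

lemma map_poly_Rats:
  assumes "\<And>i. coeff p i \<in> F" and "z \<in> \<rat>"
  shows "a (poly p z) = poly (map_poly a p) z"
  using assms(1)
proof (induction p)
  case (pCons c p)
  have p: "coeff p i \<in> F" for i
    using pCons.prems[of "Suc i"] by simp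
  have "z * poly p z \<in> F"
    using assms(2) Rats_subset mult_mem poly_mem[OF p] by blast
  then have "a (c + z * poly p z) = a c + z * a (poly p z)"
    using pCons.prems[of 0] map_add map_Rats_mult[OF assms(2)] Rats_subset assms(2) poly_mem[OF p]
    by auto
  then show ?case
    using pCons.IH[OF p] by (simp add: map_poly_pCons map_zero)
qed (simp add: map_zero)

lemma derivation_if_map_square:
  assumes square: "\<And>x. x \<in> F \<Longrightarrow> a (x ^ 2) = 2 * x * a x"
  shows "derivation_on F a"
proof -
  have "a (x * y) = x * a y + a x * y" if "x \<in> F" and "y \<in> F" for x y
  proof -
    have "(x + y) ^ 2 = x ^ 2 + (x * y + x * y) + y ^ 2"
      by (simp add: power2_eq_square algebra_simps)
    then have "a ((x + y) ^ 2) = a (x ^ 2) + (a (x * y) + a (x * y)) + a (y ^ 2)"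
      using that map_add add_mem mult_mem power_mem by metis
    moreover have "a ((x + y) ^ 2) = 2 * (x + y) * (a x + a y)"
      using square[OF add_mem[OF that]] map_add[OF that] by simp
    ultimately have "2 * a (x * y) = 2 * (x * a y + a x * y)"
      using square[OF \<open>x \<in> F\<close>] square[OF \<open>y \<in> F\<close>] by (simp add: algebra_simps)
    then show ?thesis
      by (metis mult_cancel_left zero_neq_numeral)
  qed
  then show ?thesis
    using additive unfolding derivation_on_def by blast
qed

lemma map_power_degree:
  fixes P :: "rat poly"
  assumes "P \<noteq> 0"
    and eq: "\<forall>x\<in>F. a (poly (map_poly of_rat P) x) = poly (map_poly of_rat (pderiv P)) x * a x"
    and "x \<in> F"
  shows "a (x ^ degree P) = of_nat (degree P) * x ^ (degree P - 1) * a x"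
proof -
  define Q D where "Q = map_poly (of_rat :: rat \<Rightarrow> complex) P"
    and "D = map_poly (of_rat :: rat \<Rightarrow> complex) (pderiv P)"
  define k where "k = degree P"
  have coeff_Q: "coeff (Q \<circ>\<^sub>p [:0, x:]) i = of_rat (coeff P i) * x ^ i" for i
    by (simp add: Q_def coeff_pcompose_linear coeff_map_poly mult.commute)
  have "map_poly a (Q \<circ>\<^sub>p [:0, x:]) = (D \<circ>\<^sub>p [:0, x:]) * [:0, a x:]"
  proof (rule poly_eqI_Rats)
    fix z :: complex assume z: "z \<in> \<rat>"
    then have "z * x \<in> F"
      using Rats_subset mult_mem \<open>x \<in> F\<close> by blast
    have coeffs_in_F: "coeff (Q \<circ>\<^sub>p [:0, x:]) i \<in> F" for i
      using coeff_Q mult_mem[OF _ power_mem[OF \<open>x \<in> F\<close>]] Rats_subset Rats_of_rat by (metis subsetD)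
    have "poly (map_poly a (Q \<circ>\<^sub>p [:0, x:])) z = a (poly Q (z * x))"
      using map_poly_Rats[OF coeffs_in_F z] by (simp add: poly_pcompose mult.commute)
    also have "\<dots> = poly D (z * x) * (z * a x)"
      using eq \<open>z * x \<in> F\<close> map_Rats_mult[OF z \<open>x \<in> F\<close>] by (simp add: Q_def D_def)
    finally show "poly (map_poly a (Q \<circ>\<^sub>p [:0, x:])) z = poly ((D \<circ>\<^sub>p [:0, x:]) * [:0, a x:]) z"
      by (simp add: poly_pcompose mult.commute)
  qed
  then have "coeff (map_poly a (Q \<circ>\<^sub>p [:0, x:])) k = coeff ((D \<circ>\<^sub>p [:0, x:]) * [:0, a x:]) k"
    by simp
  moreover have "coeff (map_poly a (Q \<circ>\<^sub>p [:0, x:])) k = of_rat (coeff P k) * a (x ^ k)"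
    using map_Rats_mult[OF Rats_of_rat power_mem[OF \<open>x \<in> F\<close>]]
    by (simp add: coeff_map_poly map_zero coeff_Q)
  moreover have "coeff ((D \<circ>\<^sub>p [:0, x:]) * [:0, a x:]) k = of_rat (coeff P k) * (of_nat k * x ^ (k - 1) * a x)"
    by (cases k) (simp_all add: coeff_mult_0 D_def coeff_pcompose_linear coeff_map_poly coeff_pderiv of_rat_mult of_rat_add)
  moreover have "coeff P k \<noteq> 0"
    using \<open>P \<noteq> 0\<close> by (simp add: k_def)
  ultimately show ?thesis
    by (simp add: k_def)
qed

lemma map_square_if_map_power:
  assumes "k \<ge> 2"
    and power: "\<And>x. x \<in> F \<Longrightarrow> a (x ^ k) = of_nat k * x ^ (k - 1) * a x"
    and "x \<in> F"
  shows "a (x ^ 2) = 2 * x * a x"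
proof -
  have "(of_nat k - 1) * a 1 = 0"
    using power[OF one_mem] by (simp add: algebra_simps)
  then have "a 1 = 0"
    using \<open>k \<ge> 2\<close> by simp
  then have a_Rats: "a z = 0" if "z \<in> \<rat>" for z
    using map_Rats_mult[OF that one_mem] by simp
  define W where "W = [:x, 1:]"
  have coeff_W: "coeff (W ^ n) j = of_nat (n choose j) * x ^ (n - j)" for n j
    by (cases "j \<le> n") (simp_all add: W_def coeff_linear_poly_power coeff_eq_0 degree_linear_power)
  have "map_poly a (W ^ k) = smult (of_nat k * a x) (W ^ (k - 1))"
  proof (rule poly_eqI_Rats)
    fix z :: complex assume z: "z \<in> \<rat>"
    then have "x + z \<in> F" and "a (x + z) = a x"
      using Rats_subset add_mem map_add \<open>x \<in> F\<close> a_Rats by auto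
    then show "poly (map_poly a (W ^ k)) z = poly (smult (of_nat k * a x) (W ^ (k - 1))) z"
      using map_poly_Rats[OF _ z, of "W ^ k"] power[of "x + z"] coeff_W
        mult_mem of_nat_mem power_mem \<open>x \<in> F\<close>
      by (simp add: W_def algebra_simps)
  qed
  then have "coeff (map_poly a (W ^ k)) (k - 2) = coeff (smult (of_nat k * a x) (W ^ (k - 1))) (k - 2)"
    by simp
  moreover have "coeff (map_poly a (W ^ k)) (k - 2) = of_nat (k choose 2) * a (x ^ 2)"
    using \<open>k \<ge> 2\<close> map_of_nat_mult[OF power_mem[OF \<open>x \<in> F\<close>]]
    by (simp add: coeff_map_poly map_zero coeff_W binomial_symmetric[of 2 k])
  moreover have "coeff (smult (of_nat k * a x) (W ^ (k - 1))) (k - 2) = of_nat k * of_nat (k - 1) * x * a x"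
  proof -
    obtain m where "k = Suc (Suc m)"
      using \<open>k \<ge> 2\<close> by (metis add_2_eq_Suc le_Suc_ex)
    then show ?thesis
      using coeff_W[of "Suc m" m] by (simp del: power_Suc)
  qed
  moreover have "2 * (k choose 2) = k * (k - 1)"
  proof -
    have "even (k * (k - 1))"
      using \<open>k \<ge> 2\<close> by (cases "even k") simp_all
    then show ?thesis
      by (simp add: choose_two)
  qed
  ultimately have "of_nat (k * (k - 1)) * a (x ^ 2) = of_nat (k * (k - 1)) * (2 * x * a x)"
    by (metis (no_types, lifting) mult.assoc mult.left_commute of_nat_mult of_nat_numeral)
  moreover have "k * (k - 1) \<noteq> 0"
    using \<open>k \<ge> 2\<close> by simp
  ultimately show ?thesis
    by simp
qed

end

theorem mainTheorem5:
  fixes F :: "complex set" and k :: nat and P :: "rat poly" and a :: "complex \<Rightarrow> complex"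
  assumes "complex_subfield F"
    and "k \<ge> 2"
    and "degree P = k"
    and "additive_on F a"
    and "\<forall>x\<in>F. a (poly (map_poly of_rat P) x) = poly (map_poly of_rat (pderiv P)) x * a x"
  shows "derivation_on F a"
proof -
  interpret additive_on_subfield F a
    using assms(1,4) by unfold_locales
  have "P \<noteq> 0"
    using assms(2,3) by auto
  then have "a (x ^ k) = of_nat k * x ^ (k - 1) * a x" if "x \<in> F" for x
    using map_power_degree assms(3,5) that by blast
  then show ?thesis
    using derivation_if_map_square map_square_if_map_power assms(2) by blast
qed

end
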